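(* Let $p\ge5$ be a prime, let $\lambda,k\in\mathbb{N}$, and let $\zeta_k$ be a $k$th root of unity. Then for all integers $r$ and $m$ with $m\ge\lambda$, the power series $(1-(\zeta_k-q)^{krp})^m\in\mathbb{Z}[\zeta_k][[q]]$ satisfies $$(1-(\zeta_k-q)^{krp})^m\equiv O\!\left(q^{\lambda-1+p(m-\lambda-1)}\right)\pmod{p^\lambda},$$ i.e. every coefficient of $q^i$ with $i<\lambda-1+p(m-\lambda-1)$ lies in $p^\lambda\mathbb{Z}[\zeta_k]$.
   Context: $(\zeta_k-q)^{krp}$ for negative exponent is expanded as a power series in $q$ with coefficients in $\mathbb{Z}[\zeta_k]$. *)

theory Defs
  imports "HOL-Computational_Algebra.Computational_Algebra"
begin

definition int_adjoin :: "complex \<Rightarrow> complex set" where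
  "int_adjoin z = {x. \<exists>P :: int poly. x = poly (map_poly of_int P) z}"

end

theory Submission
  imports Defs
begin

(* Since z is a unit of Z[z], the series v = (z - q)^(kr) has coefficients in Z[z], constant
   term z^(kr) = 1, and v^p = (z - q)^(krp). Writing v = 1 + q u, the divisibility of the inner
   binomial coefficients by p gives v^p = 1 + p q S + q^p T over Z[z]. In the binomial expansion
   of (1 - v^p)^m = (-1)^m (p q S + q^p T)^m, the terms with at least lam factors p q S are
   divisible by p^lam, and the others have q-adic order at least
   j + p (m - j) >= lam - 1 + p (m - lam + 1). *)

lemma map_poly_of_int_add:
  "map_poly (of_int :: int \<Rightarrow> 'a::ring_1) (P + Q) = map_poly of_int P + map_poly of_int Q"
  by (simp add: poly_eq_iff coeff_map_poly)

lemma map_poly_of_int_mult: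
  "map_poly (of_int :: int \<Rightarrow> 'a::comm_ring_1) (P * Q) = map_poly of_int P * map_poly of_int Q"
  by (simp add: poly_eq_iff coeff_map_poly coeff_mult)

lemma map_poly_of_int_uminus:
  "map_poly (of_int :: int \<Rightarrow> 'a::ring_1) (- P) = - map_poly of_int P"
  by (simp add: poly_eq_iff coeff_map_poly)

lemma int_adjoin_add: "x \<in> int_adjoin z \<Longrightarrow> y \<in> int_adjoin z \<Longrightarrow> x + y \<in> int_adjoin z"
  unfolding int_adjoin_def by (auto simp flip: poly_add map_poly_of_int_add)

lemma int_adjoin_mult: "x \<in> int_adjoin z \<Longrightarrow> y \<in> int_adjoin z \<Longrightarrow> x * y \<in> int_adjoin z"
  unfolding int_adjoin_def by (auto simp flip: poly_mult map_poly_of_int_mult)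

lemma int_adjoin_uminus: "x \<in> int_adjoin z \<Longrightarrow> - x \<in> int_adjoin z"
  unfolding int_adjoin_def by (auto simp flip: poly_minus map_poly_of_int_uminus)

lemma int_adjoin_of_int: "of_int c \<in> int_adjoin z"
  unfolding int_adjoin_def by (intro CollectI exI[of _ "[:c:]"]) (simp add: map_poly_pCons)

lemma int_adjoin_of_nat: "of_nat n \<in> int_adjoin z"
  using int_adjoin_of_int[of "int n" z] by simp

lemma int_adjoin_0: "0 \<in> int_adjoin z" and int_adjoin_1: "1 \<in> int_adjoin z"
  using int_adjoin_of_nat[of 0 z] int_adjoin_of_nat[of 1 z] by simp_all

lemma int_adjoin_self: "z \<in> int_adjoin z"
  unfolding int_adjoin_def by (intro CollectI exI[of _ "[:0, 1:]"]) (simp add: map_poly_pCons)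

lemma int_adjoin_power: "x \<in> int_adjoin z \<Longrightarrow> x ^ n \<in> int_adjoin z"
  by (induction n) (simp_all add: int_adjoin_1 int_adjoin_mult)

lemma int_adjoin_sum:
  "(\<And>i. i \<in> A \<Longrightarrow> f i \<in> int_adjoin z) \<Longrightarrow> sum f A \<in> int_adjoin z"
  by (induction A rule: infinite_finite_induct) (simp_all add: int_adjoin_0 int_adjoin_add)

lemma inverse_root_of_unity_in_int_adjoin:
  assumes "z ^ k = 1" "k > 0"
  shows "inverse z \<in> int_adjoin z"
proof -
  have "z * z ^ (k - 1) = 1"
    using assms by (simp flip: power_Suc)
  then have "inverse z = z ^ (k - 1)"
    by (simp add: inverse_unique)
  then show ?thesis
    by (simp add: int_adjoin_power int_adjoin_self)
qed

definition fps_over :: "complex \<Rightarrow> complex fps \<Rightarrow> bool" where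
  "fps_over z f \<longleftrightarrow> (\<forall>i. f $ i \<in> int_adjoin z)"

lemma fps_over_add: "fps_over z f \<Longrightarrow> fps_over z g \<Longrightarrow> fps_over z (f + g)"
  by (simp add: fps_over_def int_adjoin_add)

lemma fps_over_uminus: "fps_over z f \<Longrightarrow> fps_over z (- f)"
  by (simp add: fps_over_def int_adjoin_uminus)

lemma fps_over_diff: "fps_over z f \<Longrightarrow> fps_over z g \<Longrightarrow> fps_over z (f - g)"
  using fps_over_add[of z f "- g"] fps_over_uminus[of z g] by simp

lemma fps_over_mult: "fps_over z f \<Longrightarrow> fps_over z g \<Longrightarrow> fps_over z (f * g)"
  by (auto simp: fps_over_def fps_mult_nth intro!: int_adjoin_sum int_adjoin_mult)

lemma fps_over_const: "c \<in> int_adjoin z \<Longrightarrow> fps_over z (fps_const c)"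
  by (simp add: fps_over_def int_adjoin_0)

lemma fps_over_of_nat: "fps_over z (of_nat n)"
  using fps_over_const[OF int_adjoin_of_nat, of z n] by (simp add: fps_of_nat)

lemma fps_over_0: "fps_over z 0" and fps_over_1: "fps_over z 1"
  using fps_over_of_nat[of z 0] fps_over_of_nat[of z 1] by simp_all

lemma fps_over_X: "fps_over z fps_X"
  by (simp add: fps_over_def fps_X_def int_adjoin_0 int_adjoin_1)

lemma fps_over_power: "fps_over z f \<Longrightarrow> fps_over z (f ^ n)"
  by (induction n) (simp_all add: fps_over_1 fps_over_mult)

lemma fps_over_sum:
  "(\<And>i. i \<in> A \<Longrightarrow> fps_over z (f i)) \<Longrightarrow> fps_over z (sum f A)"
  by (induction A rule: infinite_finite_induct) (simp_all add: fps_over_0 fps_over_add)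

lemma fps_over_shift: "fps_over z f \<Longrightarrow> fps_over z (fps_shift n f)"
  by (simp add: fps_over_def)

lemma inverse_fps_const_minus_X:
  fixes c :: "'a::field"
  assumes "c \<noteq> 0"
  shows "inverse (fps_const c - fps_X) = Abs_fps (\<lambda>i. inverse c ^ Suc i)"
proof (rule fps_inverse_unique, rule fps_ext)
  fix n
  show "((fps_const c - fps_X) * Abs_fps (\<lambda>i. inverse c ^ Suc i)) $ n = 1 $ n"
    using assms by (cases n) (simp_all add: algebra_simps)
qed

lemma power_int_mult_of_nat:
  fixes x :: "'a::{monoid_mult, inverse}"
  shows "x powi (n * int m) = (x powi n) ^ m"
proof -
  have "nat (- (n * int m)) = nat (- n) * m" if "n < 0"
    using that by (simp add: nat_mult_distrib flip: mult_minus_left)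
  then show ?thesis
    by (auto simp: power_int_def zero_le_mult_iff nat_mult_distrib power_mult)
qed

lemma fps_power_int_nth_0:
  fixes f :: "'a::division_ring fps"
  shows "(f powi n) $ 0 = (f $ 0) powi n"
  by (simp add: power_int_def fps_power_zeroth)

lemma fps_over_power_int_const_minus_X:
  assumes "z \<noteq> 0" "inverse z \<in> int_adjoin z"
  shows "fps_over z ((fps_const z - fps_X) powi n)"
proof -
  have "fps_over z (fps_const z - fps_X)"
    by (intro fps_over_diff fps_over_const fps_over_X int_adjoin_self)
  moreover have "fps_over z (inverse (fps_const z - fps_X))"
    using assms
    by (simp add: inverse_fps_const_minus_X fps_over_def int_adjoin_power del: power_Suc)
  ultimately show ?thesis
    by (simp add: power_int_def fps_over_power)
qed

lemma prime_power_one_plus: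
  fixes x :: "'a::comm_semiring_1"
  assumes "prime p"
  shows "(1 + x) ^ p = 1 + x ^ p + of_nat p * x * (\<Sum>i<p - 1. of_nat ((p choose Suc i) div p) * x ^ i)"
proof -
  obtain q where p: "p = Suc (Suc q)"
    using prime_ge_2_nat[OF assms] by (metis add_2_eq_Suc le_Suc_ex)
  have middle: "of_nat (p choose Suc i) * x ^ Suc i = of_nat p * x * (of_nat ((p choose Suc i) div p) * x ^ i)"
    if "i \<le> q" for i
  proof -
    have "p dvd p choose Suc i"
      using assms that p by (intro dvd_choose_prime) auto
    then have "p choose Suc i = p * ((p choose Suc i) div p)"
      by (simp add: dvd_mult_div_cancel)
    then show ?thesis
      by (metis (no_types) mult.assoc mult.left_commute of_nat_mult power_Suc)
  qed
  have "p - 1 = Suc q"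
    using p by simp
  have split: "(\<Sum>k\<le>p. g k) = g 0 + (\<Sum>i\<le>q. g (Suc i)) + g p" for g :: "nat \<Rightarrow> 'a"
    unfolding p by (simp only: sum.atMost_Suc[of g "Suc q"] sum.atMost_Suc_shift[of g q])
  have "(1 + x) ^ p = (\<Sum>k\<le>p. of_nat (p choose k) * x ^ k)"
    using binomial_ring[of x 1 p] by (simp add: add.commute)
  also have "\<dots> = 1 + (\<Sum>i\<le>q. of_nat (p choose Suc i) * x ^ Suc i) + x ^ p"
    by (simp add: split)
  also have "(\<Sum>i\<le>q. of_nat (p choose Suc i) * x ^ Suc i)
      = of_nat p * x * (\<Sum>i<p - 1. of_nat ((p choose Suc i) div p) * x ^ i)"
    unfolding sum_distrib_left \<open>p - 1 = Suc q\<close> lessThan_Suc_atMost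
    by (intro sum.cong refl middle) simp
  finally show ?thesis
    by (simp add: ac_simps)
qed

lemma fps_over_prime_power_decomp:
  assumes "prime p" "fps_over z v" "v $ 0 = 1"
  obtains S T where "fps_over z S" "fps_over z T"
    "v ^ p = 1 + fps_const (of_nat p) * fps_X * S + fps_X ^ p * T"
proof
  define u where "u = fps_shift 1 v"
  define S where "S = u * (\<Sum>i<p - 1. of_nat ((p choose Suc i) div p) * (fps_X * u) ^ i)"
  have "v = 1 + fps_X * u"
    using assms(3) by (intro fps_ext) (simp add: u_def)
  then show "v ^ p = 1 + fps_const (of_nat p) * fps_X * S + fps_X ^ p * u ^ p"
    using prime_power_one_plus[OF assms(1), of "fps_X * u"]
    by (simp add: S_def fps_of_nat power_mult_distrib ac_simps)
  have "fps_over z u"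
    using assms(2) by (simp add: u_def fps_over_shift)
  then show "fps_over z S" "fps_over z (u ^ p)"
    unfolding S_def
    by (auto intro!: fps_over_mult fps_over_sum fps_over_power fps_over_of_nat fps_over_X)
qed

(* The paper's "f = O(q^N) (mod c)" over Z[z]: below degree N, f agrees with a multiple of c. *)
definition fps_bigO_mod :: "complex \<Rightarrow> complex \<Rightarrow> nat \<Rightarrow> complex fps \<Rightarrow> bool" where
  "fps_bigO_mod z c N f \<longleftrightarrow>
     (\<exists>g h. fps_over z g \<and> fps_over z h \<and> f = fps_const c * g + fps_X ^ N * h)"

lemma fps_bigO_mod_nth:
  assumes "fps_bigO_mod z c N f" "i < N"
  shows "\<exists>a \<in> int_adjoin z. f $ i = c * a"
  using assms by (auto simp: fps_bigO_mod_def fps_over_def fps_X_power_mult_nth)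

lemma fps_bigO_mod_0: "fps_bigO_mod z c N 0"
  unfolding fps_bigO_mod_def by (intro exI[of _ 0]) (simp add: fps_over_0)

lemma fps_bigO_mod_const_mult:
  "fps_over z g \<Longrightarrow> fps_bigO_mod z c N (fps_const c * g)"
  unfolding fps_bigO_mod_def by (intro exI[of _ g] exI[of _ 0]) (simp add: fps_over_0)

lemma fps_bigO_mod_X_power_mult:
  assumes "fps_over z h" "N \<le> n"
  shows "fps_bigO_mod z c N (fps_X ^ n * h)"
proof -
  have "fps_X ^ n * h = fps_X ^ N * (fps_X ^ (n - N) * h)"
    using assms(2) by (simp flip: mult.assoc power_add)
  then show ?thesis
    unfolding fps_bigO_mod_def using assms(1)
    by (intro exI[of _ 0] exI[of _ "fps_X ^ (n - N) * h"])
       (simp add: fps_over_0 fps_over_mult fps_over_power fps_over_X)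
qed

lemma fps_bigO_mod_add:
  assumes "fps_bigO_mod z c N f" "fps_bigO_mod z c N f'"
  shows "fps_bigO_mod z c N (f + f')"
proof -
  obtain g h g' h' where "fps_over z g" "fps_over z h" "fps_over z g'" "fps_over z h'"
    and "f = fps_const c * g + fps_X ^ N * h" "f' = fps_const c * g' + fps_X ^ N * h'"
    using assms unfolding fps_bigO_mod_def by blast
  then show ?thesis
    unfolding fps_bigO_mod_def
    by (intro exI[of _ "g + g'"] exI[of _ "h + h'"]) (simp add: fps_over_add algebra_simps)
qed

lemma fps_bigO_mod_mult:
  assumes "fps_over z u" "fps_bigO_mod z c N f"
  shows "fps_bigO_mod z c N (u * f)"
proof -
  obtain g h where "fps_over z g" "fps_over z h" "f = fps_const c * g + fps_X ^ N * h"
    using assms(2) unfolding fps_bigO_mod_def by blast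
  with assms(1) show ?thesis
    unfolding fps_bigO_mod_def
    by (intro exI[of _ "u * g"] exI[of _ "u * h"]) (simp add: fps_over_mult algebra_simps)
qed

lemma fps_bigO_mod_sum:
  "(\<And>j. j \<in> A \<Longrightarrow> fps_bigO_mod z c N (f j)) \<Longrightarrow> fps_bigO_mod z c N (sum f A)"
  by (induction A rule: infinite_finite_induct)
     (simp_all add: fps_bigO_mod_add fps_bigO_mod_0)

lemma binomial_exponent_bound:
  fixes e j lam m N :: nat
  assumes "e > 0" "j < lam" "lam \<le> m" "N < lam + e * (Suc m - lam)"
  shows "N \<le> j + e * (m - j)"
proof -
  have "m - j = (Suc m - lam) + (lam - Suc j)"
    using assms(2,3) by simp
  then have "e * (m - j) = e * (Suc m - lam) + e * (lam - Suc j)"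
    by (simp add: distrib_left)
  moreover have "lam - Suc j \<le> e * (lam - Suc j)"
    using assms(1) by simp
  ultimately show ?thesis
    using assms(2,4) by linarith
qed

lemma fps_bigO_mod_binomial_power:
  assumes "c \<in> int_adjoin z" "fps_over z S" "fps_over z T"
    and "e > 0" "lam \<le> m" "N < lam + e * (Suc m - lam)"
  shows "fps_bigO_mod z (c ^ lam) N ((fps_const c * fps_X * S + fps_X ^ e * T) ^ m)"
proof -
  define G where "G j = of_nat (m choose j) * S ^ j * T ^ (m - j)" for j
  have G: "fps_over z (G j)" for j
    unfolding G_def using assms(2,3) by (intro fps_over_mult fps_over_power fps_over_of_nat)
  have "(fps_const c * fps_X * S + fps_X ^ e * T) ^ m
      = (\<Sum>j\<le>m. fps_const (c ^ j) * (fps_X ^ (j + e * (m - j)) * G j))"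
    unfolding binomial_ring G_def
    by (simp add: power_mult_distrib power_add power_mult fps_const_power ac_simps)
  also have "fps_bigO_mod z (c ^ lam) N \<dots>"
  proof (intro fps_bigO_mod_sum)
    fix j assume "j \<in> {..m}"
    show "fps_bigO_mod z (c ^ lam) N (fps_const (c ^ j) * (fps_X ^ (j + e * (m - j)) * G j))"
    proof (cases "lam \<le> j")
      case True
      then have "fps_const (c ^ j) = fps_const (c ^ lam) * fps_const (c ^ (j - lam))"
        by (simp flip: power_add)
      then show ?thesis
        using G assms(1)
        by (simp only: mult.assoc)
           (intro fps_bigO_mod_const_mult fps_over_mult fps_over_const fps_over_power
             fps_over_X int_adjoin_power)
    next
      case False
      then have "N \<le> j + e * (m - j)"
        using assms(4-6) by (intro binomial_exponent_bound) auto
      then show ?thesis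
        using G assms(1)
        by (simp only: mult.left_commute[of "fps_const (c ^ j)"])
           (intro fps_bigO_mod_X_power_mult fps_over_mult fps_over_const int_adjoin_power)
    qed
  qed
  finally show ?thesis .
qed

lemma fps_bigO_mod_one_minus_prime_power:
  assumes "prime p" "fps_over z v" "v $ 0 = 1" "lam \<le> n" "N < lam + p * (Suc n - lam)"
  shows "fps_bigO_mod z (of_nat p ^ lam) N ((1 - v ^ p) ^ n)"
proof -
  obtain S T where "fps_over z S" "fps_over z T"
    and vp: "v ^ p = 1 + fps_const (of_nat p) * fps_X * S + fps_X ^ p * T"
    using fps_over_prime_power_decomp[OF assms(1-3)] by blast
  then have "fps_bigO_mod z (of_nat p ^ lam) N
      ((fps_const (of_nat p) * fps_X * S + fps_X ^ p * T) ^ n)"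
    using assms(4,5) prime_gt_0_nat[OF assms(1)]
    by (intro fps_bigO_mod_binomial_power int_adjoin_of_nat)
  moreover have "(1 - v ^ p) ^ n
      = (- 1) ^ n * (fps_const (of_nat p) * fps_X * S + fps_X ^ p * T) ^ n"
    unfolding vp by (simp flip: power_minus)
  ultimately show ?thesis
    by (metis fps_bigO_mod_mult fps_over_power fps_over_uminus fps_over_1)
qed

theorem lemma4p9:
  fixes p lam k :: nat and z :: complex and r m :: int
  assumes "prime p" and "p \<ge> 5" and "k > 0" and "z ^ k = 1"
    and "m \<ge> int lam"
  shows "\<forall>i::nat. int i < int lam - 1 + int p * (m - int lam - 1) \<longrightarrow>
           (\<exists>a \<in> int_adjoin z.
              fps_nth ((1 - (fps_const z - fps_X) powi (int k * r * int p)) ^ nat m) i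
                = of_nat p ^ lam * a)"
proof (intro allI impI)
  fix i :: nat
  assume i: "int i < int lam - 1 + int p * (m - int lam - 1)"
  define n where "n = nat m"
  have m: "m = int n" and "lam \<le> n"
    using assms(5) by (simp_all add: n_def)
  have "int p * (int n - int lam - 1) \<le> int p * int (Suc n - lam)"
    using \<open>lam \<le> n\<close> by (intro mult_left_mono) auto
  then have "int (Suc i) < int (lam + p * (Suc n - lam))"
    using i m by simp
  then have bound: "Suc i < lam + p * (Suc n - lam)"
    by (simp only: of_nat_less_iff)
  define v where "v = (fps_const z - fps_X) powi (int k * r)"
  have "z \<noteq> 0"
    using assms(3,4) by (auto simp: power_0_left)
  then have "fps_over z v"
    unfolding v_def using inverse_root_of_unity_in_int_adjoin[OF assms(4,3)]
    by (rule fps_over_power_int_const_minus_X)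
  moreover have "v $ 0 = 1"
    by (simp add: v_def fps_power_int_nth_0 assms(4) flip: power_int_power)
  ultimately have "fps_bigO_mod z (of_nat p ^ lam) (Suc i) ((1 - v ^ p) ^ n)"
    using fps_bigO_mod_one_minus_prime_power[OF assms(1) _ _ \<open>lam \<le> n\<close> bound] by blast
  moreover have "(fps_const z - fps_X) powi (int k * r * int p) = v ^ p"
    by (simp add: v_def power_int_mult_of_nat)
  ultimately show "\<exists>a \<in> int_adjoin z.
      fps_nth ((1 - (fps_const z - fps_X) powi (int k * r * int p)) ^ nat m) i = of_nat p ^ lam * a"
    using fps_bigO_mod_nth by (simp add: n_def)
qed

end
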